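(* Let $F$, $G$ and $\Pi\colon\Sigma_A\times I\to\Sigma_N\times I$ be as in the context. If $S\subset\Sigma_A\times I$ is an attracting strip with respect to $G$, then $\Pi(S)$ is an attracting bi-strip with respect to $F$. If $S\subset\Sigma_A\times I$ is a repelling strip with respect to $G$, then $F^{-1}$ is well defined on $\Pi(S)$ and $\Pi(S)$ is a repelling bi-strip with respect to $F$.
   Context: $I=[0,1]$, $R(x)=1-x$. $F(\xi,p)=(\sigma(\xi),f_{\xi_0}(p))$ on $\Sigma_N\times I$, $\Sigma_N=\{1,\ldots,N\}^{\mathbb Z}$, with $f_i$ $C^1$-diffeomorphisms onto their images. $\mathcal I_P$ / $\mathcal I_R$: indices of orientation preserving / reversing $f_i$. $A=(a_{ij})_{i,j=1}^{2N}$ with $a_{ij}=1$ if ($i\in\mathcal I_P$, $j\le N$), or ($i\in\mathcal I_R$, $j>N$), or ($i-N\in\mathcal I_P$, $j>N$), or ($i-N\in\mathcal I_R$, $j\le N$), else $0$; $\Sigma_A$ the $A$-admissible sequences in $\{1,\ldots,2N\}^{\mathbb Z}$ with shift $\sigma_A$; $\pi(\omega)_n=\overline{\omega_n}$ ($\overline i=i$ for $i\le N$, $\overline i=i-N$ otherwise). $G(\omega,x)=(\sigma_A(\omega),g_{\omega_0}(x))$ with $g_i=f_i$, $g_{i+N}=R\circ f_i\circ R$ ($i\in\mathcal I_P$), $g_i=R\circ f_i$, $g_{i+N}=f_i\circ R$ ($i\in\mathcal I_R$). $C=\{\omega\colon\omega_0\le N\}$; $\Pi(\omega,x)=(\pi(\omega),x)$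 if $\omega\in C$, $(\pi(\omega),R(x))$ otherwise. For a space $\Sigma$ (either $\Sigma_A$ or $\Sigma_N$) and functions $\varphi,\psi\colon\Sigma\to I$ with $\varphi(\omega)<\psi(\omega)$ for all $\omega$, the strip is $S_{\varphi,\psi}=\{(\omega,x)\colon\varphi(\omega)\le x\le\psi(\omega)\}$; a bi-strip is a union of two strips. For a step skew-product $H$ on $\Sigma\times I$, a (bi-)strip $S$ is attracting if $H(S)\subset\operatorname{int}(S)$, and repelling if $H^{-1}$ is defined on $S$ and $H^{-1}(S)\subset\operatorname{int}(S)$. *)

theory Defs
  imports "HOL-Analysis.Analysis"
begin

text \<open>Sequences are maps int => nat (bi-infinite words); the topology on int => nat is the
product topology of the discrete topology on nat (library instance). The interval I = [0,1].\<close>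

abbreviation II :: "real set" where "II \<equiv> {0..1}"

definition Rf :: "real \<Rightarrow> real" where "Rf x = 1 - x"

definition shift :: "(int \<Rightarrow> nat) \<Rightarrow> (int \<Rightarrow> nat)" where
  "shift \<xi> = (\<lambda>n. \<xi> (n + 1))"

definition SigmaN :: "nat \<Rightarrow> (int \<Rightarrow> nat) set" where
  "SigmaN N = {\<xi>. \<forall>n. \<xi> n \<in> {1..N}}"

text \<open>C^1-diffeomorphism of I onto its image (contained in I): C^1 on I (one-sided derivatives
at the endpoints), injective, with nowhere vanishing derivative (so the inverse is C^1).\<close>
definition C1_diffeo_onto_image :: "(real \<Rightarrow> real) \<Rightarrow> bool" where
  "C1_diffeo_onto_image f \<longleftrightarrow> f ` II \<subseteq> II \<and> inj_on f II \<and>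
     (\<exists>f'. (\<forall>x\<in>II. (f has_real_derivative f' x) (at x within II)) \<and>
           continuous_on II f' \<and> (\<forall>x\<in>II. f' x \<noteq> 0))"

definition IP :: "nat \<Rightarrow> (nat \<Rightarrow> real \<Rightarrow> real) \<Rightarrow> nat set" where
  "IP N f = {i \<in> {1..N}. strict_mono_on II (f i)}"

definition IR :: "nat \<Rightarrow> (nat \<Rightarrow> real \<Rightarrow> real) \<Rightarrow> nat set" where
  "IR N f = {i \<in> {1..N}. strict_antimono_on II (f i)}"

definition FF :: "(nat \<Rightarrow> real \<Rightarrow> real) \<Rightarrow> (int \<Rightarrow> nat) \<times> real \<Rightarrow> (int \<Rightarrow> nat) \<times> real" where
  "FF f z = (shift (fst z), f (fst z 0) (snd z))"

definition amat :: "nat \<Rightarrow> (nat \<Rightarrow> real \<Rightarrow> real) \<Rightarrow> nat \<Rightarrow> nat \<Rightarrow> bool" where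
  "amat N f i j \<longleftrightarrow>
     (i \<in> IP N f \<and> j \<le> N) \<or> (i \<in> IR N f \<and> j > N) \<or>
     (i - N \<in> IP N f \<and> i > N \<and> j > N) \<or> (i - N \<in> IR N f \<and> i > N \<and> j \<le> N)"

definition SigmaA :: "nat \<Rightarrow> (nat \<Rightarrow> real \<Rightarrow> real) \<Rightarrow> (int \<Rightarrow> nat) set" where
  "SigmaA N f = {\<omega>. (\<forall>n. \<omega> n \<in> {1..2*N}) \<and> (\<forall>n. amat N f (\<omega> n) (\<omega> (n + 1)))}"

definition bar :: "nat \<Rightarrow> nat \<Rightarrow> nat" where
  "bar N i = (if i \<le> N then i else i - N)"

definition piA :: "nat \<Rightarrow> (int \<Rightarrow> nat) \<Rightarrow> (int \<Rightarrow> nat)" where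
  "piA N \<omega> = (\<lambda>n. bar N (\<omega> n))"

definition gmap :: "nat \<Rightarrow> (nat \<Rightarrow> real \<Rightarrow> real) \<Rightarrow> nat \<Rightarrow> real \<Rightarrow> real" where
  "gmap N f j =
     (if j \<le> N then (if j \<in> IP N f then f j else Rf \<circ> f j)
      else (if j - N \<in> IP N f then Rf \<circ> f (j - N) \<circ> Rf else f (j - N) \<circ> Rf))"

definition GG :: "nat \<Rightarrow> (nat \<Rightarrow> real \<Rightarrow> real) \<Rightarrow> (int \<Rightarrow> nat) \<times> real \<Rightarrow> (int \<Rightarrow> nat) \<times> real" where
  "GG N f z = (shift (fst z), gmap N f (fst z 0) (snd z))"

definition PiMap :: "nat \<Rightarrow> (int \<Rightarrow> nat) \<times> real \<Rightarrow> (int \<Rightarrow> nat) \<times> real" where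
  "PiMap N z = (if fst z 0 \<le> N then (piA N (fst z), snd z) else (piA N (fst z), Rf (snd z)))"

definition strip :: "(int \<Rightarrow> nat) set \<Rightarrow> ((int \<Rightarrow> nat) \<Rightarrow> real) \<Rightarrow> ((int \<Rightarrow> nat) \<Rightarrow> real)
    \<Rightarrow> ((int \<Rightarrow> nat) \<times> real) set" where
  "strip Sig \<phi> \<psi> = {(\<omega>, x). \<omega> \<in> Sig \<and> \<phi> \<omega> \<le> x \<and> x \<le> \<psi> \<omega>}"

definition is_strip :: "(int \<Rightarrow> nat) set \<Rightarrow> ((int \<Rightarrow> nat) \<times> real) set \<Rightarrow> bool" where
  "is_strip Sig S \<longleftrightarrow> (\<exists>\<phi> \<psi>. (\<forall>\<omega>\<in>Sig. \<phi> \<omega> \<in> II \<and> \<psi> \<omega> \<in> II \<and> \<phi> \<omega> < \<psi> \<omega>)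
      \<and> S = strip Sig \<phi> \<psi>)"

definition is_bistrip :: "(int \<Rightarrow> nat) set \<Rightarrow> ((int \<Rightarrow> nat) \<times> real) set \<Rightarrow> bool" where
  "is_bistrip Sig S \<longleftrightarrow> (\<exists>S1 S2. is_strip Sig S1 \<and> is_strip Sig S2 \<and> S = S1 \<union> S2)"

definition phase_top :: "(int \<Rightarrow> nat) set \<Rightarrow> ((int \<Rightarrow> nat) \<times> real) topology" where
  "phase_top Sig = prod_topology (top_of_set Sig) (top_of_set II)"

definition attracting ::
  "(int \<Rightarrow> nat) set \<Rightarrow> ((int \<Rightarrow> nat) \<times> real \<Rightarrow> (int \<Rightarrow> nat) \<times> real)
     \<Rightarrow> ((int \<Rightarrow> nat) \<times> real) set \<Rightarrow> bool" where
  "attracting Sig H S \<longleftrightarrow> H ` S \<subseteq> phase_top Sig interior_of S"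

text \<open>H^{-1} is defined on S (S lies in the image of Sig x I) and H^{-1}(S) lies in int(S).\<close>
definition repelling ::
  "(int \<Rightarrow> nat) set \<Rightarrow> ((int \<Rightarrow> nat) \<times> real \<Rightarrow> (int \<Rightarrow> nat) \<times> real)
     \<Rightarrow> ((int \<Rightarrow> nat) \<times> real) set \<Rightarrow> bool" where
  "repelling Sig H S \<longleftrightarrow> S \<subseteq> H ` (Sig \<times> II) \<and>
     inv_into (Sig \<times> II) H ` S \<subseteq> phase_top Sig interior_of S"

end

theory Submission
  imports Defs
begin

text \<open>A sequence in Sigma_A is determined by its projection xi in Sigma_N together with the
half (omega_n <= N or omega_n > N) it occupies at position 0: admissibility says exactly that the
half switches after each orientation-reversing letter, so the half at position n is the initial one
flipped by the parity of the number of reversing letters between 0 and n. Hence Pi maps each of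
the two clopen halves of Sigma_A x I bijectively and openly onto Sigma_N x I (the second one
composed with the reflection R): a strip goes to a union of two strips, and interiors go into
interiors. Since Pi o G = F o Pi and F is injective on Sigma_N x I, Pi carries G(S) to F(Pi(S))
and G^-1(S) to F^-1(Pi(S)), so attraction and repulsion are transported along Pi.\<close>

definition cyl :: "(int \<Rightarrow> 'a) \<Rightarrow> int \<Rightarrow> (int \<Rightarrow> 'a) set" where
  "cyl \<omega> K = {\<eta>. \<forall>n. \<bar>n\<bar> \<le> K \<longrightarrow> \<eta> n = \<omega> n}"

lemma open_cyl: "open (cyl (\<omega> :: int \<Rightarrow> 'a::discrete_topology) K)"
proof -
  have "open {\<eta>. \<forall>n\<in>{-K..K}. \<eta> (id n) \<in> {\<omega> n}}"
    by (rule product_topology_basis') (simp_all add: open_discrete)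
  moreover have "cyl \<omega> K = {\<eta>. \<forall>n\<in>{-K..K}. \<eta> (id n) \<in> {\<omega> n}}"
    by (auto simp: cyl_def abs_le_iff)
  ultimately show ?thesis
    by simp
qed

lemma open_contains_cyl:
  fixes T :: "(int \<Rightarrow> 'a::topological_space) set"
  assumes "open T" "\<omega> \<in> T"
  obtains K where "cyl \<omega> K \<subseteq> T"
proof -
  obtain U where fin: "finite {n. U n \<noteq> UNIV}" and "\<omega> \<in> PiE UNIV U" "PiE UNIV U \<subseteq> T"
    using assms unfolding open_fun_def openin_product_topology_alt by fastforce
  define K where "K = Max (insert 0 (abs ` {n. U n \<noteq> UNIV}))"
  have "\<bar>n\<bar> \<le> K" if "U n \<noteq> UNIV" for n
    unfolding K_def using fin that by (intro Max_ge) auto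
  then have "cyl \<omega> K \<subseteq> PiE UNIV U"
    using \<open>\<omega> \<in> PiE UNIV U\<close> by (fastforce simp: cyl_def PiE_UNIV_domain)
  then show ?thesis
    using that \<open>PiE UNIV U \<subseteq> T\<close> by blast
qed

lemma interior_of_phase_top_iff:
  "(\<omega>, x) \<in> phase_top Sig interior_of S \<longleftrightarrow>
     \<omega> \<in> Sig \<and> x \<in> II \<and> (\<exists>K e. e > 0 \<and> (Sig \<inter> cyl \<omega> K) \<times> (II \<inter> ball x e) \<subseteq> S)"
proof
  assume "(\<omega>, x) \<in> phase_top Sig interior_of S"
  then obtain T where T: "openin (phase_top Sig) T" "(\<omega>, x) \<in> T" "T \<subseteq> S"
    unfolding interior_of_def by auto
  then obtain U V where "openin (top_of_set Sig) U" "openin (top_of_set II) V"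
    and UV: "\<omega> \<in> U" "x \<in> V" "U \<times> V \<subseteq> T"
    unfolding phase_top_def openin_prod_topology_alt by meson
  then obtain U' V' where "open U'" "U = Sig \<inter> U'" "open V'" "V = II \<inter> V'"
    by (meson openin_open)
  moreover obtain K where "cyl \<omega> K \<subseteq> U'"
    using open_contains_cyl \<open>open U'\<close> UV(1) \<open>U = Sig \<inter> U'\<close> by blast
  moreover obtain e where "e > 0" "ball x e \<subseteq> V'"
    using \<open>open V'\<close> UV(2) \<open>V = II \<inter> V'\<close> open_contains_ball by blast
  ultimately have "(Sig \<inter> cyl \<omega> K) \<times> (II \<inter> ball x e) \<subseteq> S"
    using UV(3) T(3) by blast
  then show "\<omega> \<in> Sig \<and> x \<in> II \<and> (\<exists>K e. e > 0 \<and> (Sig \<inter> cyl \<omega> K) \<times> (II \<inter> ball x e) \<subseteq> S)"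
    using \<open>e > 0\<close> UV(1,2) \<open>U = Sig \<inter> U'\<close> \<open>V = II \<inter> V'\<close> by blast
next
  assume "\<omega> \<in> Sig \<and> x \<in> II \<and> (\<exists>K e. e > 0 \<and> (Sig \<inter> cyl \<omega> K) \<times> (II \<inter> ball x e) \<subseteq> S)"
  then obtain K e where "\<omega> \<in> Sig" "x \<in> II" "e > 0" and box: "(Sig \<inter> cyl \<omega> K) \<times> (II \<inter> ball x e) \<subseteq> S"
    by blast
  have "openin (phase_top Sig) ((Sig \<inter> cyl \<omega> K) \<times> (II \<inter> ball x e))"
    unfolding phase_top_def openin_prod_Times_iff
    using open_cyl[of \<omega> K] by (simp add: openin_open_Int)
  moreover have "(\<omega>, x) \<in> (Sig \<inter> cyl \<omega> K) \<times> (II \<inter> ball x e)"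
    using \<open>\<omega> \<in> Sig\<close> \<open>x \<in> II\<close> \<open>e > 0\<close> by (simp add: cyl_def)
  ultimately show "(\<omega>, x) \<in> phase_top Sig interior_of S"
    using box unfolding interior_of_def by blast
qed

lemma is_strip_strip:
  "(\<forall>\<omega>\<in>Sig. \<phi> \<omega> \<in> II \<and> \<psi> \<omega> \<in> II \<and> \<phi> \<omega> < \<psi> \<omega>) \<Longrightarrow> is_strip Sig (strip Sig \<phi> \<psi>)"
  unfolding is_strip_def by blast

lemma is_strip_subset: "is_strip Sig S \<Longrightarrow> S \<subseteq> Sig \<times> II"
  by (force simp: is_strip_def strip_def)

lemma inv_into_semiconj:
  assumes semiconj: "\<And>q. q \<in> X \<Longrightarrow> P (H q) = H' (P q)"
    and "\<And>q. q \<in> X \<Longrightarrow> P q \<in> Y" "inj_on H' Y" "p \<in> H ` X"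
  shows "inv_into Y H' (P p) = P (inv_into X H p)"
proof -
  let ?q = "inv_into X H p"
  have "?q \<in> X" "H ?q = p"
    using \<open>p \<in> H ` X\<close> by (auto intro: inv_into_into f_inv_into_f)
  then have "P p = H' (P ?q)"
    using semiconj by metis
  then show ?thesis
    using \<open>?q \<in> X\<close> assms(2,3) by simp
qed

definition flip_parity :: "(int \<Rightarrow> bool) \<Rightarrow> int \<Rightarrow> bool" where
  "flip_parity p n = odd (card {k \<in> {min 0 n..<max 0 n}. p k})"

lemma flip_parity_0 [simp]: "flip_parity p 0 = False"
  by (simp add: flip_parity_def)

lemma flip_parity_step: "flip_parity p (n + 1) = (flip_parity p n \<noteq> p n)"
proof -
  have fin: "finite {k. a \<le> k \<and> k < b \<and> p k}" for a b :: int
    by (rule finite_subset[of _ "{a..<b}"]) auto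
  show ?thesis
  proof (cases "n \<ge> 0")
    case True
    then have "{k \<in> {min 0 (n + 1)..<max 0 (n + 1)}. p k} =
        (if p n then insert n else id) {k \<in> {min 0 n..<max 0 n}. p k}"
      by (cases "p n") (auto, metis order_le_less)
    with True show ?thesis
      by (simp add: flip_parity_def fin)
  next
    case False
    then have "{k \<in> {min 0 n..<max 0 n}. p k} =
        (if p n then insert n else id) {k \<in> {min 0 (n + 1)..<max 0 (n + 1)}. p k}"
      by (cases "p n") (auto, metis add1_zle_eq order_le_less)
    with False show ?thesis
      by (simp add: flip_parity_def fin)
  qed
qed

lemma flip_parity_cong:
  assumes "\<And>k. \<bar>k\<bar> \<le> K \<Longrightarrow> p k = q k" "\<bar>n\<bar> \<le> K"
  shows "flip_parity p n = flip_parity q n"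
proof -
  have "{k \<in> {min 0 n..<max 0 n}. p k} = {k \<in> {min 0 n..<max 0 n}. q k}"
    using assms by auto
  then show ?thesis
    by (simp add: flip_parity_def)
qed

lemma flip_parity_unique:
  assumes "\<And>n. s (n + 1) = (s n \<noteq> p n)"
  shows "s n = (s 0 \<noteq> flip_parity p n)"
proof (induction n rule: int_induct[where k = 0])
  case (step1 n)
  then show ?case using assms[of n] flip_parity_step[of p n] by blast
next
  case (step2 n)
  then show ?case using assms[of "n - 1"] flip_parity_step[of p "n - 1"] by (simp; blast)
qed simp

lemma C1_diffeo_onto_image_strict_mono_or_antimono:
  assumes "C1_diffeo_onto_image g"
  shows "strict_mono_on II g \<or> strict_antimono_on II g"
proof -
  obtain g' where "\<forall>x\<in>II. (g has_real_derivative g' x) (at x within II)" and "inj_on g II"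
    using assms unfolding C1_diffeo_onto_image_def by blast
  then have "continuous_on II g"
    unfolding continuous_on_eq_continuous_within using DERIV_continuous by blast
  then show ?thesis
    using injective_eq_monotone_map[of II g] \<open>inj_on g II\<close> by (simp add: is_interval_cc)
qed

lemma IP_IR_disjoint: "IP N f \<inter> IR N f = {}"
proof -
  have "f i 0 < f i 1" "f i 1 < f i 0" if "i \<in> IP N f" "i \<in> IR N f" for i
    using that unfolding IP_def IR_def by (simp_all add: monotone_on_def)
  then show ?thesis
    by fastforce
qed

lemma IP_IR_cover:
  assumes "\<forall>i\<in>{1..N}. C1_diffeo_onto_image (f i)" "i \<in> {1..N}"
  shows "i \<in> IP N f \<union> IR N f"
  using assms C1_diffeo_onto_image_strict_mono_or_antimono[of "f i"] by (auto simp: IP_def IR_def)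

lemma amat_iff:
  "amat N f i j \<longleftrightarrow> bar N i \<in> IP N f \<union> IR N f \<and> (N < j \<longleftrightarrow> (N < i) \<noteq> (bar N i \<in> IR N f))"
proof -
  have "0 \<notin> IP N f" "0 \<notin> IR N f" "i \<le> N \<Longrightarrow> i \<in> IP N f \<Longrightarrow> i \<notin> IR N f"
    using IP_IR_disjoint[of N f] by (auto simp: IP_def IR_def)
  moreover have "N < i \<Longrightarrow> i \<notin> IP N f \<and> i \<notin> IR N f"
    by (auto simp: IP_def IR_def)
  ultimately show ?thesis
    using IP_IR_disjoint[of N f] by (auto simp: amat_def bar_def)
qed

lemma SigmaN_range: "\<xi> \<in> SigmaN N \<Longrightarrow> 1 \<le> \<xi> n \<and> \<xi> n \<le> N"
  by (simp add: SigmaN_def)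

definition admissible_lift :: "nat \<Rightarrow> (nat \<Rightarrow> real \<Rightarrow> real) \<Rightarrow> (int \<Rightarrow> nat) \<Rightarrow> bool \<Rightarrow> int \<Rightarrow> nat"
  where "admissible_lift N f \<xi> b n =
    (if b \<noteq> flip_parity (\<lambda>k. \<xi> k \<in> IR N f) n then \<xi> n + N else \<xi> n)"

lemma admissible_lift_upper_iff:
  "\<xi> \<in> SigmaN N \<Longrightarrow> N < admissible_lift N f \<xi> b n \<longleftrightarrow> b \<noteq> flip_parity (\<lambda>k. \<xi> k \<in> IR N f) n"
  using SigmaN_range[of \<xi> N n] by (auto simp: admissible_lift_def)

lemma bar_admissible_lift: "\<xi> \<in> SigmaN N \<Longrightarrow> bar N (admissible_lift N f \<xi> b n) = \<xi> n"
  using SigmaN_range[of \<xi> N n] by (auto simp: admissible_lift_def bar_def)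

lemma piA_admissible_lift: "\<xi> \<in> SigmaN N \<Longrightarrow> piA N (admissible_lift N f \<xi> b) = \<xi>"
  by (simp add: piA_def bar_admissible_lift)

lemma admissible_lift_in_SigmaA:
  assumes "\<forall>i\<in>{1..N}. C1_diffeo_onto_image (f i)" "\<xi> \<in> SigmaN N"
  shows "admissible_lift N f \<xi> b \<in> SigmaA N f"
proof -
  let ?\<omega> = "admissible_lift N f \<xi> b"
  have "amat N f (?\<omega> n) (?\<omega> (n + 1))" for n
  proof -
    have "(N < ?\<omega> (n + 1)) = ((N < ?\<omega> n) \<noteq> (\<xi> n \<in> IR N f))"
      unfolding admissible_lift_upper_iff[OF assms(2)] flip_parity_step by argo
    then show ?thesis
      using IP_IR_cover[OF assms(1)] SigmaN_range[OF assms(2)]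
      by (simp add: amat_iff bar_admissible_lift assms(2))
  qed
  moreover have "?\<omega> n \<in> {1..2 * N}" for n
    using SigmaN_range[OF assms(2), of n] by (simp add: admissible_lift_def)
  ultimately show ?thesis
    by (simp add: SigmaA_def)
qed

lemma admissible_lift_piA:
  assumes "\<omega> \<in> SigmaA N f"
  shows "admissible_lift N f (piA N \<omega>) (N < \<omega> 0) = \<omega>"
proof
  fix n
  have "(N < \<omega> (m + 1)) = ((N < \<omega> m) \<noteq> (piA N \<omega> m \<in> IR N f))" for m
    using assms by (simp add: SigmaA_def amat_iff piA_def)
  then have "(N < \<omega> n) = ((N < \<omega> 0) \<noteq> flip_parity (\<lambda>k. piA N \<omega> k \<in> IR N f) n)"
    by (rule flip_parity_unique)
  moreover have "piA N \<omega> n = bar N (\<omega> n)"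
    by (simp add: piA_def)
  ultimately show "admissible_lift N f (piA N \<omega>) (N < \<omega> 0) n = \<omega> n"
    unfolding admissible_lift_def by (auto simp: bar_def)
qed

lemma SigmaA_cases:
  assumes "\<omega> \<in> SigmaA N f"
  obtains \<xi> b where "\<xi> \<in> SigmaN N" "\<omega> = admissible_lift N f \<xi> b"
proof
  have "bar N (\<omega> n) \<in> {1..N}" for n
  proof -
    have "\<omega> n \<in> {1..2 * N}"
      using assms by (simp add: SigmaA_def)
    then show ?thesis
      by (auto simp: bar_def)
  qed
  then show "piA N \<omega> \<in> SigmaN N"
    by (simp add: SigmaN_def piA_def)
  show "\<omega> = admissible_lift N f (piA N \<omega>) (N < \<omega> 0)"
    using admissible_lift_piA[OF assms] by simp
qed

lemma admissible_lift_cyl: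
  "\<zeta> \<in> cyl \<xi> K \<Longrightarrow> admissible_lift N f \<zeta> b \<in> cyl (admissible_lift N f \<xi> b) K"
  using flip_parity_cong[of K "\<lambda>k. \<zeta> k \<in> IR N f" "\<lambda>k. \<xi> k \<in> IR N f"]
  by (simp add: cyl_def admissible_lift_def)

lemma PiMap_admissible_lift:
  "\<xi> \<in> SigmaN N \<Longrightarrow> PiMap N (admissible_lift N f \<xi> b, x) = (\<xi>, if b then Rf x else x)"
proof -
  assume "\<xi> \<in> SigmaN N"
  then have "admissible_lift N f \<xi> b 0 \<le> N \<longleftrightarrow> \<not> b"
    using admissible_lift_upper_iff[of \<xi> N f b 0] by auto
  with \<open>\<xi> \<in> SigmaN N\<close> show ?thesis
    by (simp add: PiMap_def piA_admissible_lift)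
qed

lemma PiMap_SigmaA_II:
  assumes "q \<in> SigmaA N f \<times> II"
  shows "PiMap N q \<in> SigmaN N \<times> II"
proof -
  obtain \<omega> x where q: "q = (\<omega>, x)" "\<omega> \<in> SigmaA N f" "x \<in> II"
    using assms by auto
  then obtain \<xi> b where "\<xi> \<in> SigmaN N" "\<omega> = admissible_lift N f \<xi> b"
    using SigmaA_cases by blast
  with q show ?thesis
    by (simp add: PiMap_admissible_lift Rf_def)
qed

lemma PiMap_GG:
  assumes "\<omega> \<in> SigmaA N f"
  shows "PiMap N (GG N f (\<omega>, x)) = FF f (PiMap N (\<omega>, x))"
proof -
  let ?i = "bar N (\<omega> 0)"
  have "\<forall>n. amat N f (\<omega> n) (\<omega> (n + 1))"
    using assms by (simp add: SigmaA_def)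
  then have "amat N f (\<omega> 0) (\<omega> 1)"
    by (metis add_0)
  then have "(N < \<omega> 1) = ((N < \<omega> 0) \<noteq> (?i \<in> IR N f))" "?i \<in> IP N f \<union> IR N f"
    by (simp_all add: amat_iff)
  then have "(if \<omega> 1 \<le> N then gmap N f (\<omega> 0) x else Rf (gmap N f (\<omega> 0) x)) =
      f ?i (if \<omega> 0 \<le> N then x else Rf x)"
    using IP_IR_disjoint[of N f] by (auto simp: gmap_def bar_def Rf_def)
  then show ?thesis
    by (auto simp: GG_def FF_def PiMap_def piA_def shift_def)
qed

lemma PiMap_GG_image:
  "T \<subseteq> SigmaA N f \<times> UNIV \<Longrightarrow> PiMap N ` GG N f ` T = FF f ` PiMap N ` T"
  unfolding image_image by (rule image_cong) (auto simp: PiMap_GG)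

lemma inj_on_FF:
  assumes "\<forall>i\<in>{1..N}. C1_diffeo_onto_image (f i)"
  shows "inj_on (FF f) (SigmaN N \<times> II)"
proof (rule inj_onI)
  fix p q
  assume "p \<in> SigmaN N \<times> II" "q \<in> SigmaN N \<times> II" and eq: "FF f p = FF f q"
  then obtain \<xi> x \<zeta> y where p: "p = (\<xi>, x)" "\<xi> \<in> SigmaN N" "x \<in> II"
    and q: "q = (\<zeta>, y)" "y \<in> II"
    by auto
  have "\<xi> = \<zeta>"
    using eq unfolding p q FF_def shift_def fun_eq_iff by (metis diff_add_cancel fst_conv)
  moreover have "inj_on (f (\<xi> 0)) II"
    using assms p(2) by (auto simp: SigmaN_def C1_diffeo_onto_image_def)
  ultimately show "p = q"
    using eq p q by (auto simp: FF_def dest: inj_onD)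
qed

lemma PiMap_strip:
  assumes "\<forall>i\<in>{1..N}. C1_diffeo_onto_image (f i)"
  shows "PiMap N ` strip (SigmaA N f) \<phi> \<psi> =
    strip (SigmaN N) (\<lambda>\<xi>. \<phi> (admissible_lift N f \<xi> False)) (\<lambda>\<xi>. \<psi> (admissible_lift N f \<xi> False)) \<union>
    strip (SigmaN N) (\<lambda>\<xi>. 1 - \<psi> (admissible_lift N f \<xi> True)) (\<lambda>\<xi>. 1 - \<phi> (admissible_lift N f \<xi> True))"
    (is "_ = ?S1 \<union> ?S2")
proof (intro equalityI subsetI)
  fix p
  assume "p \<in> PiMap N ` strip (SigmaA N f) \<phi> \<psi>"
  then obtain \<omega> x where \<omega>: "\<omega> \<in> SigmaA N f" "\<phi> \<omega> \<le> x" "x \<le> \<psi> \<omega>" "p = PiMap N (\<omega>, x)"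
    unfolding strip_def by auto
  obtain \<xi> b where "\<xi> \<in> SigmaN N" "\<omega> = admissible_lift N f \<xi> b"
    using SigmaA_cases[OF \<omega>(1)] .
  with \<omega> show "p \<in> ?S1 \<union> ?S2"
    by (cases b) (auto simp: strip_def PiMap_admissible_lift Rf_def)
next
  fix p
  assume "p \<in> ?S1 \<union> ?S2"
  then obtain \<xi> x where \<xi>: "\<xi> \<in> SigmaN N" and p: "p = (\<xi>, x)"
    and "(\<phi> (admissible_lift N f \<xi> False) \<le> x \<and> x \<le> \<psi> (admissible_lift N f \<xi> False)) \<or>
      (1 - \<psi> (admissible_lift N f \<xi> True) \<le> x \<and> x \<le> 1 - \<phi> (admissible_lift N f \<xi> True))"
    unfolding strip_def by auto
  then obtain b where "(admissible_lift N f \<xi> b, if b then 1 - x else x) \<in> strip (SigmaA N f) \<phi> \<psi>"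
  proof (elim disjE)
    assume "\<phi> (admissible_lift N f \<xi> False) \<le> x \<and> x \<le> \<psi> (admissible_lift N f \<xi> False)"
    then show ?thesis
      using that[of False] admissible_lift_in_SigmaA[OF assms \<xi>] by (simp add: strip_def)
  next
    assume "1 - \<psi> (admissible_lift N f \<xi> True) \<le> x \<and> x \<le> 1 - \<phi> (admissible_lift N f \<xi> True)"
    then show ?thesis
      using that[of True] admissible_lift_in_SigmaA[OF assms \<xi>] by (simp add: strip_def)
  qed
  moreover have "PiMap N (admissible_lift N f \<xi> b, if b then 1 - x else x) = p"
    using \<xi> p by (simp add: PiMap_admissible_lift Rf_def)
  ultimately show "p \<in> PiMap N ` strip (SigmaA N f) \<phi> \<psi>"
    by (metis image_eqI)
qed

lemma is_bistrip_PiMap: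
  assumes "\<forall>i\<in>{1..N}. C1_diffeo_onto_image (f i)" "is_strip (SigmaA N f) S"
  shows "is_bistrip (SigmaN N) (PiMap N ` S)"
proof -
  obtain \<phi> \<psi> where \<phi>\<psi>: "\<forall>\<omega>\<in>SigmaA N f. \<phi> \<omega> \<in> II \<and> \<psi> \<omega> \<in> II \<and> \<phi> \<omega> < \<psi> \<omega>"
    and S: "S = strip (SigmaA N f) \<phi> \<psi>"
    using assms(2) unfolding is_strip_def by blast
  have "\<phi> (admissible_lift N f \<xi> b) \<in> II \<and> \<psi> (admissible_lift N f \<xi> b) \<in> II \<and>
      \<phi> (admissible_lift N f \<xi> b) < \<psi> (admissible_lift N f \<xi> b)" if "\<xi> \<in> SigmaN N" for \<xi> b
    using \<phi>\<psi> admissible_lift_in_SigmaA[OF assms(1) that] by blast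
  then have "is_strip (SigmaN N)
      (strip (SigmaN N) (\<lambda>\<xi>. \<phi> (admissible_lift N f \<xi> False)) (\<lambda>\<xi>. \<psi> (admissible_lift N f \<xi> False)))"
    "is_strip (SigmaN N)
      (strip (SigmaN N) (\<lambda>\<xi>. 1 - \<psi> (admissible_lift N f \<xi> True)) (\<lambda>\<xi>. 1 - \<phi> (admissible_lift N f \<xi> True)))"
    by (auto intro!: is_strip_strip)
  then show ?thesis
    unfolding S PiMap_strip[OF assms(1)] is_bistrip_def by blast
qed

lemma PiMap_box_subset:
  assumes "\<forall>i\<in>{1..N}. C1_diffeo_onto_image (f i)" "\<xi> \<in> SigmaN N"
    and box: "(SigmaA N f \<inter> cyl (admissible_lift N f \<xi> b) K) \<times> (II \<inter> ball y e) \<subseteq> S"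
  shows "(SigmaN N \<inter> cyl \<xi> K) \<times> (II \<inter> ball (if b then Rf y else y) e) \<subseteq> PiMap N ` S"
proof clarify
  fix \<zeta> z
  assume \<zeta>: "\<zeta> \<in> SigmaN N" "\<zeta> \<in> cyl \<xi> K" and z: "z \<in> II" "z \<in> ball (if b then Rf y else y) e"
  let ?z = "if b then Rf z else z"
  have "(admissible_lift N f \<zeta> b, ?z) \<in> S"
    using box admissible_lift_in_SigmaA[OF assms(1) \<zeta>(1)] admissible_lift_cyl[OF \<zeta>(2)] z
    by (auto simp: Rf_def dist_real_def)
  moreover have "PiMap N (admissible_lift N f \<zeta> b, ?z) = (\<zeta>, z)"
    using \<zeta>(1) by (simp add: PiMap_admissible_lift Rf_def)
  ultimately show "(\<zeta>, z) \<in> PiMap N ` S"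
    by (metis image_eqI)
qed

lemma PiMap_interior_of:
  assumes "\<forall>i\<in>{1..N}. C1_diffeo_onto_image (f i)"
  shows "PiMap N ` (phase_top (SigmaA N f) interior_of S) \<subseteq> phase_top (SigmaN N) interior_of (PiMap N ` S)"
proof (rule image_subsetI)
  fix q
  assume "q \<in> phase_top (SigmaA N f) interior_of S"
  moreover obtain \<omega> y where q: "q = (\<omega>, y)"
    by fastforce
  ultimately obtain K e where "\<omega> \<in> SigmaA N f" "y \<in> II" "e > 0"
    and box: "(SigmaA N f \<inter> cyl \<omega> K) \<times> (II \<inter> ball y e) \<subseteq> S"
    using interior_of_phase_top_iff by blast
  obtain \<xi> b where \<xi>: "\<xi> \<in> SigmaN N" and \<omega>: "\<omega> = admissible_lift N f \<xi> b"
    using SigmaA_cases[OF \<open>\<omega> \<in> SigmaA N f\<close>] .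
  have "(if b then Rf y else y) \<in> II"
    using \<open>y \<in> II\<close> by (simp add: Rf_def)
  then have "(\<xi>, if b then Rf y else y) \<in> phase_top (SigmaN N) interior_of (PiMap N ` S)"
    using PiMap_box_subset[OF assms \<xi> box[unfolded \<omega>]] \<xi> \<open>e > 0\<close>
    unfolding interior_of_phase_top_iff by blast
  then show "PiMap N q \<in> phase_top (SigmaN N) interior_of (PiMap N ` S)"
    using q \<xi> \<omega> by (simp add: PiMap_admissible_lift)
qed

lemma attracting_PiMap:
  assumes "\<forall>i\<in>{1..N}. C1_diffeo_onto_image (f i)"
    and "S \<subseteq> SigmaA N f \<times> UNIV" "attracting (SigmaA N f) (GG N f) S"
  shows "attracting (SigmaN N) (FF f) (PiMap N ` S)"
proof -
  have "FF f ` PiMap N ` S = PiMap N ` GG N f ` S"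
    using assms(2) by (rule PiMap_GG_image[symmetric])
  also have "\<dots> \<subseteq> PiMap N ` (phase_top (SigmaA N f) interior_of S)"
    using assms(3) unfolding attracting_def by (rule image_mono)
  also have "\<dots> \<subseteq> phase_top (SigmaN N) interior_of (PiMap N ` S)"
    by (rule PiMap_interior_of[OF assms(1)])
  finally show ?thesis
    unfolding attracting_def .
qed

lemma PiMap_subset_FF_image:
  assumes "S \<subseteq> GG N f ` (SigmaA N f \<times> II)"
  shows "PiMap N ` S \<subseteq> FF f ` (SigmaN N \<times> II)"
proof -
  have "PiMap N ` S \<subseteq> PiMap N ` GG N f ` (SigmaA N f \<times> II)"
    using assms by (rule image_mono)
  also have "\<dots> = FF f ` PiMap N ` (SigmaA N f \<times> II)"
    by (rule PiMap_GG_image) auto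
  also have "\<dots> \<subseteq> FF f ` (SigmaN N \<times> II)"
    using PiMap_SigmaA_II by blast
  finally show ?thesis .
qed

lemma repelling_PiMap:
  assumes diffeo: "\<forall>i\<in>{1..N}. C1_diffeo_onto_image (f i)"
    and "repelling (SigmaA N f) (GG N f) S"
  shows "repelling (SigmaN N) (FF f) (PiMap N ` S)"
proof -
  have covered: "S \<subseteq> GG N f ` (SigmaA N f \<times> II)"
    and inv_interior: "inv_into (SigmaA N f \<times> II) (GG N f) ` S \<subseteq> phase_top (SigmaA N f) interior_of S"
    using assms(2) unfolding repelling_def by auto
  have "inv_into (SigmaN N \<times> II) (FF f) ` PiMap N ` S =
      PiMap N ` inv_into (SigmaA N f \<times> II) (GG N f) ` S"
    unfolding image_image
  proof (rule image_cong[OF refl], rule inv_into_semiconj)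
    show "PiMap N (GG N f q) = FF f (PiMap N q)" if "q \<in> SigmaA N f \<times> II" for q
      using that PiMap_GG by auto
  qed (use PiMap_SigmaA_II inj_on_FF[OF diffeo] covered in auto)
  also have "\<dots> \<subseteq> phase_top (SigmaN N) interior_of (PiMap N ` S)"
    using inv_interior PiMap_interior_of[OF diffeo] by blast
  finally show ?thesis
    unfolding repelling_def using PiMap_subset_FF_image[OF covered] by blast
qed

theorem lemma3p9:
  fixes N :: nat and f :: "nat \<Rightarrow> real \<Rightarrow> real"
    and S :: "((int \<Rightarrow> nat) \<times> real) set"
  assumes diffeo: "\<forall>i\<in>{1..N}. C1_diffeo_onto_image (f i)"
  shows "(is_strip (SigmaA N f) S \<and> attracting (SigmaA N f) (GG N f) S \<longrightarrow>
            is_bistrip (SigmaN N) (PiMap N ` S) \<and> attracting (SigmaN N) (FF f) (PiMap N ` S))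
       \<and> (is_strip (SigmaA N f) S \<and> repelling (SigmaA N f) (GG N f) S \<longrightarrow>
            PiMap N ` S \<subseteq> FF f ` (SigmaN N \<times> II) \<and>
            is_bistrip (SigmaN N) (PiMap N ` S) \<and> repelling (SigmaN N) (FF f) (PiMap N ` S))"
proof (intro conjI impI; elim conjE)
  assume "is_strip (SigmaA N f) S"
  then show "is_bistrip (SigmaN N) (PiMap N ` S)" "is_bistrip (SigmaN N) (PiMap N ` S)"
    using is_bistrip_PiMap[OF diffeo] by blast+
  have "S \<subseteq> SigmaA N f \<times> UNIV"
    using is_strip_subset[OF \<open>is_strip (SigmaA N f) S\<close>] by blast
  then show "attracting (SigmaA N f) (GG N f) S \<Longrightarrow> attracting (SigmaN N) (FF f) (PiMap N ` S)"
    using attracting_PiMap[OF diffeo] by blast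
  show "repelling (SigmaA N f) (GG N f) S \<Longrightarrow> PiMap N ` S \<subseteq> FF f ` (SigmaN N \<times> II)"
    using PiMap_subset_FF_image unfolding repelling_def by blast
  show "repelling (SigmaA N f) (GG N f) S \<Longrightarrow> repelling (SigmaN N) (FF f) (PiMap N ` S)"
    using repelling_PiMap[OF diffeo] by blast
qed

end
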